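(* Let $g,h\in\mathbb{F}_q[t]$ with $g\neq 0$, and assume that $\gcd(g,h)$ is either $1$ or square-free. Then there are infinitely many monic Carmichael polynomials $f\in\mathbb{F}_q[t]$ with $f\equiv h\pmod g$.
   Context: $\mathbb{F}_q$ is the finite field with $q$ elements. A finite ring $S$ is a Carmichael ring if $S$ is not a field and $a^{|S|}=a$ for every $a\in S$. A polynomial $f\in\mathbb{F}_q[t]$ is a Carmichael polynomial if $\mathbb{F}_q[t]/(f)$ is a Carmichael ring. *)

theory Defs
  imports "HOL-Algebra.Algebraic_Closure_Type" "HOL-Computational_Algebra.Computational_Algebra"
begin

definition carmichael_ring :: "('b, 'c) ring_scheme \<Rightarrow> bool" where
  "carmichael_ring S \<longleftrightarrow> finite (carrier S) \<and> \<not> field S \<and>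
     (\<forall>a \<in> carrier S. a [^]\<^bsub>S\<^esub> card (carrier S) = a)"

abbreviation poly_ring_of :: "'a::field poly ring" where
  "poly_ring_of \<equiv> ring_of_type_algebra"

definition carmichael_poly :: "'a::field poly \<Rightarrow> bool" where
  "carmichael_poly f \<longleftrightarrow>
     carmichael_ring (poly_ring_of Quot (PIdl\<^bsub>poly_ring_of\<^esub> f))"

end

theory Submission
  imports Defs "HOL-Library.Cardinality"
begin

text \<open>Write \<open>q\<close> for the size of the field. If \<open>f = A * B\<close> with \<open>A\<close>, \<open>B\<close> of positive degree
  divides \<open>X^(q^n) - X\<close> for \<open>n = deg f\<close>, then in the ring \<open>F_q[X]/(f)\<close>, which has \<open>q^n\<close>
  elements and is not a field, the Frobenius identity \<open>a^(q^n) = a \<circ> X^(q^n)\<close> gives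
  \<open>a^(q^n) = a\<close>: such an \<open>f\<close> is Carmichael.

  To find such polynomials in the class of \<open>h\<close> modulo \<open>g\<close>, first choose a monic squarefree
  \<open>P \<equiv> h\<close>; this is where the hypothesis on \<open>gcd g h\<close> enters. For a suitable \<open>M\<close>, \<open>P\<close> divides
  \<open>X^(q^M) - X\<close> and \<open>X^(q^E) \<equiv> X^(q^M) (mod g)\<close> for all positive multiples \<open>E\<close> of \<open>M\<close>. The
  factors \<open>X^(q^(M q^i)) - X + 1\<close> are then all congruent modulo \<open>g\<close>, pairwise coprime and
  coprime to \<open>P\<close>, and multiplying \<open>P\<close> by a well chosen set of \<open>q^M\<close>-divisible size of them gives
  a reducible seed \<open>f\<^sub>0 \<equiv> h\<close> dividing some \<open>X^(q^N) - X\<close> whose degree lies in a prescribed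
  residue class. Finally \<open>f\<^sub>0 \<circ> L\<^sub>E\<close> with \<open>L\<^sub>E = (\<Sum>i\<le>q. X^(q^(E*i)))\<close> and
  \<open>E = M*q^t\<close> is congruent to \<open>f\<^sub>0\<close> modulo \<open>g\<close>, still monic and reducible, and divides
  \<open>X^(q^d) - X\<close> for its degree \<open>d\<close>; different \<open>t\<close> give different degrees.\<close>

abbreviation X\<^sub>p :: "'a::comm_ring_1 poly" where "X\<^sub>p \<equiv> [:0, 1:]"

section \<open>Finite fields and the Frobenius map\<close>

lemma ring_of_type_algebra_simps [simp]:
  "carrier (ring_of_type_algebra :: 'a::ring_1 ring) = UNIV"
  "x \<otimes>\<^bsub>ring_of_type_algebra\<^esub> y = x * y"
  "x \<oplus>\<^bsub>ring_of_type_algebra\<^esub> y = x + y"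
  "\<zero>\<^bsub>ring_of_type_algebra\<^esub> = 0"
  "\<one>\<^bsub>ring_of_type_algebra\<^esub> = 1"
  by (simp_all add: ring_of_type_algebra_def)

lemma ring_of_type_algebra_pow [simp]:
  "x [^]\<^bsub>(ring_of_type_algebra :: 'a::comm_ring_1 ring)\<^esub> (n::nat) = x ^ n"
  by (induction n) (simp_all add: mult.commute)

lemma power_card_eq_self:
  fixes x :: "'a::{finite,field}"
  shows "x ^ CARD('a) = x"
proof (cases "x = 0")
  case False
  let ?R = "ring_of_type_algebra :: 'a ring"
  interpret field ?R
    by (rule field_from_type_algebra)
  have fin: "finite (carrier ?R)" and x: "x \<in> carrier (Multiplicative_Group.mult_of ?R)"
    using False by simp_all
  have "x [^]\<^bsub>Multiplicative_Group.mult_of ?R\<^esub> Coset.order (Multiplicative_Group.mult_of ?R)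
      = \<one>\<^bsub>Multiplicative_Group.mult_of ?R\<^esub>"
    by (rule group.pow_order_eq_1[OF field_mult_group x])
  then have "x [^]\<^bsub>?R\<^esub> (Coset.order ?R - 1) = \<one>\<^bsub>?R\<^esub>"
    by (simp only: Multiplicative_Group.nat_pow_mult_of Multiplicative_Group.one_mult_of
        order_mult_of[OF fin])
  then have "x ^ (CARD('a) - 1) = 1"
    by (simp add: Coset.order_def)
  moreover have "CARD('a) = Suc (CARD('a) - 1)"
    by simp
  ultimately show ?thesis
    by (metis mult.right_neutral power_Suc)
qed simp

lemma card_ge_2: "CARD('a::{finite,field}) \<ge> 2"
proof -
  have "card {0::'a, 1} \<le> CARD('a)"
    by (intro card_mono) auto
  then show ?thesis
    by simp
qed

lemma X_power_eq_monom: "(X\<^sub>p :: 'a::comm_ring_1 poly) ^ n = monom 1 n"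
  by (simp add: monom_altdef)

lemma degree_X_power [simp]: "degree ((X\<^sub>p :: 'a::{comm_ring_1,zero_neq_one} poly) ^ n) = n"
  by (simp add: X_power_eq_monom degree_monom_eq)

lemma lead_coeff_X_power [simp]: "lead_coeff ((X\<^sub>p :: 'a::{comm_ring_1,zero_neq_one} poly) ^ n) = 1"
  by (simp add: X_power_eq_monom degree_monom_eq)

text \<open>Both sides have degree \<open>q\<close> and agree at all \<open>q\<close> points of the field, so their
  difference, of degree \<open>< q\<close>, vanishes.\<close>
lemma X_plus_1_power_card:
  "([:1, 1:] :: 'a::{finite,field} poly) ^ CARD('a) = X\<^sub>p ^ CARD('a) + 1"
proof (rule ccontr)
  let ?q = "CARD('a)"
  define D :: "'a poly" where "D = [:1, 1:] ^ ?q - X\<^sub>p ^ ?q - 1"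
  assume "[:1, 1:] ^ ?q \<noteq> X\<^sub>p ^ ?q + (1 :: 'a poly)"
  then have "D \<noteq> 0"
    unfolding D_def by (simp add: algebra_simps)
  have "degree D < ?q"
  proof (rule degree_lessI)
    show "D \<noteq> 0 \<or> 0 < ?q"
      using card_ge_2[where 'a='a] by auto
    have "coeff D k = 0" if "k \<ge> ?q" for k
    proof (cases "k = ?q")
      case True
      then show ?thesis
        unfolding D_def by (simp add: coeff_linear_power X_power_eq_monom)
    next
      case False
      then have "coeff ([:1, 1:] ^ ?q :: 'a poly) k = 0"
        using that by (intro coeff_eq_0) (simp add: degree_power_eq)
      then show ?thesis
        using False that unfolding D_def by (simp add: X_power_eq_monom coeff_monom)
    qed
    then show "\<forall>k\<ge>?q. coeff D k = 0"
      by blast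
  qed
  moreover have "{x. poly D x = 0} = UNIV"
    unfolding D_def by (auto simp: power_card_eq_self)
  ultimately show False
    using card_poly_roots_bound[OF \<open>D \<noteq> 0\<close>] by simp
qed

lemma binomial_card_eq_0:
  assumes "0 < k" "k < CARD('a::{finite,field})"
  shows "(of_nat (CARD('a) choose k) :: 'a) = 0"
proof -
  have "coeff ([:1, 1:] ^ CARD('a) :: 'a poly) k = of_nat (CARD('a) choose k)"
    using assms by (subst coeff_linear_poly_power) auto
  moreover have "coeff (X\<^sub>p ^ CARD('a) + 1 :: 'a poly) k = 0"
    using assms by (simp add: X_power_eq_monom coeff_monom)
  ultimately show ?thesis
    using X_plus_1_power_card by metis
qed

lemma of_nat_card_eq_0: "(of_nat CARD('a::{finite,field}) :: 'a) = 0"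
  using binomial_card_eq_0[of 1, where 'a='a] card_ge_2[where 'a='a] by simp

lemma of_nat_card_eq_0_poly: "(of_nat CARD('a::{finite,field}) :: 'a poly) = 0"
  by (simp add: of_nat_poly of_nat_card_eq_0)

lemma pderiv_power_card [simp]:
  fixes p :: "'a::{finite,field} poly"
  shows "pderiv (p ^ CARD('a)) = 0"
  by (simp add: pderiv_power of_nat_card_eq_0)

lemma frobenius_add:
  fixes x y :: "'a::{finite,field} poly"
  shows "(x + y) ^ CARD('a) = x ^ CARD('a) + y ^ CARD('a)"
proof -
  let ?q = "CARD('a)"
  have "(x + y) ^ ?q = (\<Sum>k\<le>?q. of_nat (?q choose k) * x ^ k * y ^ (?q - k))"
    by (rule binomial_ring)
  also have "\<dots> = (\<Sum>k\<in>{0, ?q}. of_nat (?q choose k) * x ^ k * y ^ (?q - k))"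
    by (intro sum.mono_neutral_right ballI) (auto simp: of_nat_poly binomial_card_eq_0)
  also have "\<dots> = x ^ ?q + y ^ ?q"
    using card_ge_2[where 'a='a] by (simp add: add_ac)
  finally show ?thesis .
qed

lemma frobenius_pow_add:
  fixes x y :: "'a::{finite,field} poly"
  shows "(x + y) ^ (CARD('a) ^ k) = x ^ (CARD('a) ^ k) + y ^ (CARD('a) ^ k)"
  by (induction k) (simp_all add: power_Suc2 power_mult frobenius_add del: power_Suc)

lemma frobenius_pow_diff:
  fixes x y :: "'a::{finite,field} poly"
  shows "(x - y) ^ (CARD('a) ^ k) = x ^ (CARD('a) ^ k) - y ^ (CARD('a) ^ k)"
  using frobenius_pow_add[of "x - y" y k] by (simp add: algebra_simps)

lemma frobenius_pow_sum:
  fixes f :: "'b \<Rightarrow> 'a::{finite,field} poly"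
  shows "(sum f A) ^ (CARD('a) ^ k) = (\<Sum>i\<in>A. f i ^ (CARD('a) ^ k))"
  by (induction A rule: infinite_finite_induct) (auto simp: frobenius_pow_add)

lemma frobenius_pow_const:
  "([:c:] :: 'a::{finite,field} poly) ^ (CARD('a) ^ k) = [:c:]"
proof -
  have "c ^ (CARD('a) ^ k) = c"
    by (induction k) (simp_all add: power_mult power_card_eq_self mult.commute[of _ "CARD('a)"])
  then show ?thesis
    by (simp add: poly_const_pow)
qed

lemma frobenius_pow_eq_pcompose:
  fixes a :: "'a::{finite,field} poly"
  shows "a ^ (CARD('a) ^ k) = a \<circ>\<^sub>p (X\<^sub>p ^ (CARD('a) ^ k))"
proof (induction a)
  case (pCons c p)
  have "pCons c p ^ (CARD('a) ^ k) = ([:c:] + X\<^sub>p * p) ^ (CARD('a) ^ k)"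
    by simp
  also have "\<dots> = [:c:] + X\<^sub>p ^ (CARD('a) ^ k) * (p \<circ>\<^sub>p X\<^sub>p ^ (CARD('a) ^ k))"
    by (simp only: frobenius_pow_add frobenius_pow_const power_mult_distrib pCons.IH)
  finally show ?case
    by (simp add: pcompose_pCons)
qed (simp add: power_0_left)

lemma dvd_pcompose_cong:
  fixes m :: "'a::comm_ring_1 poly"
  assumes "m dvd a - b"
  shows "m dvd p \<circ>\<^sub>p a - p \<circ>\<^sub>p b"
proof (induction p)
  case (pCons c p)
  have "pCons c p \<circ>\<^sub>p a - pCons c p \<circ>\<^sub>p b = a * (p \<circ>\<^sub>p a - p \<circ>\<^sub>p b) + (a - b) * (p \<circ>\<^sub>p b)"
    by (simp add: pcompose_pCons algebra_simps)
  then show ?case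
    using pCons assms by simp
qed simp

lemma degree_mult_pos:
  fixes A B :: "'a::idom poly"
  assumes "degree A > 0" "degree B > 0"
  shows "degree (A * B) > 0"
proof -
  have "A \<noteq> 0" "B \<noteq> 0"
    using assms by auto
  then show ?thesis
    using assms by (simp add: degree_mult_eq)
qed

section \<open>A sufficient condition for Carmichael polynomials\<close>

lemma card_poly_coeff_vanishing:
  "card {p :: 'a::{finite,zero} poly. \<forall>i\<ge>n. coeff p i = 0} = CARD('a) ^ n"
proof (induction n)
  case 0
  have "{p :: 'a poly. \<forall>i\<ge>0. coeff p i = 0} = {0}"
    by (auto simp: poly_eq_iff)
  then show ?case
    by simp
next
  case (Suc n)
  let ?S = "\<lambda>n. {p :: 'a poly. \<forall>i\<ge>n. coeff p i = 0}"
  have "?S (Suc n) = (\<lambda>(a, p). pCons a p) ` (UNIV \<times> ?S n)"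
  proof (intro equalityI subsetI)
    fix x assume "x \<in> ?S (Suc n)"
    then show "x \<in> (\<lambda>(a, p). pCons a p) ` (UNIV \<times> ?S n)"
    proof (cases x)
      case (pCons a p)
      then show ?thesis
        using \<open>x \<in> ?S (Suc n)\<close> by (auto simp: coeff_pCons intro!: image_eqI[of _ _ "(a, p)"])
    qed
  qed (auto simp: coeff_pCons split: nat.splits)
  moreover have "inj_on (\<lambda>(a, p). pCons a p) (UNIV \<times> ?S n)"
    by (auto simp: inj_on_def)
  ultimately show ?case
    using Suc by (simp add: card_image card_cartesian_product)
qed

lemma card_degree_less:
  assumes "n > 0"
  shows "card {p :: 'a::{finite,zero} poly. degree p < n} = CARD('a) ^ n"
proof -
  have "{p :: 'a poly. degree p < n} = {p. \<forall>i\<ge>n. coeff p i = 0}"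
    using assms by (auto simp: coeff_eq_0 intro!: degree_lessI)
  then show ?thesis
    by (simp add: card_poly_coeff_vanishing)
qed

lemma finite_degree_less: "finite {p :: 'a::{finite,zero} poly. degree p < n}"
  using card_degree_less[of n, where 'a='a] by (cases "n = 0") (auto intro: card_ge_0_finite)

abbreviation poly_quotient :: "'a::field poly \<Rightarrow> 'a poly set ring" where
  "poly_quotient f \<equiv> poly_ring_of Quot PIdl\<^bsub>poly_ring_of\<^esub> f"

abbreviation residue :: "'a::field poly \<Rightarrow> 'a poly \<Rightarrow> 'a poly set" where
  "residue f a \<equiv> PIdl\<^bsub>poly_ring_of\<^esub> f +>\<^bsub>poly_ring_of\<^esub> a"

lemma cgenideal_poly_ring: "PIdl\<^bsub>poly_ring_of\<^esub> f = {p :: 'a::field poly. f dvd p}"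
  by (auto simp: cgenideal_def dvd_def mult.commute)

lemma rcos_poly_ring:
  "residue f a = {p :: 'a::field poly. f dvd p - a}"
proof -
  have "residue f a = (\<Union>p\<in>{p. f dvd p}. {p + a})"
    by (simp add: a_r_coset_def' cgenideal_poly_ring)
  also have "\<dots> = {p. f dvd p - a}"
    by (auto intro!: UN_I[of "_ - a"])
  finally show ?thesis .
qed

lemma rcos_poly_ring_eq_iff:
  "residue f a = residue f b
    \<longleftrightarrow> f dvd a - (b :: 'a::field poly)"
proof
  assume "residue f a = residue f b"
  then show "f dvd a - b"
    by (metis (mono_tags) dvd_0_right mem_Collect_eq rcos_poly_ring right_minus_eq)
next
  assume "f dvd a - b"
  then have "f dvd p - a \<longleftrightarrow> f dvd p - b" for p
    by (metis diff_add_cancel diff_diff_eq2 dvd_add_left_iff)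
  then show "residue f a = residue f b"
    by (simp add: rcos_poly_ring)
qed

lemma carrier_quotient_poly_ring:
  assumes "degree f > 0"
  shows "carrier (poly_quotient f)
    = (\<lambda>a. residue f a) ` {a :: 'a::field poly. degree a < degree f}"
proof -
  have "carrier (poly_quotient f)
      = range (\<lambda>a. residue f (a :: 'a poly))"
    by (auto simp: FactRing_def A_RCOSETS_def')
  also have "\<dots> = (\<lambda>a. residue f a) ` {a. degree a < degree f}"
  proof (intro equalityI subsetI)
    fix x assume "x \<in> range (\<lambda>a. residue f (a :: 'a poly))"
    then obtain a where "x = residue f a"
      by blast
    moreover have "\<dots> = residue f (a mod f)"
      by (simp add: rcos_poly_ring_eq_iff minus_mod_eq_mult_div)
    moreover have "degree (a mod f) < degree f"
      using assms degree_mod_less'[of f a] by (cases "f = 0"; cases "a mod f = 0") auto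
    ultimately show "x \<in> (\<lambda>a. residue f a) ` {a. degree a < degree f}"
      by blast
  qed auto
  finally show ?thesis .
qed

lemma card_quotient_poly_ring:
  assumes "degree f > 0"
  shows "card (carrier (poly_quotient f))
    = CARD('a) ^ degree (f :: 'a::{finite,field} poly)"
proof -
  have "inj_on (\<lambda>a. residue f a) {a :: 'a poly. degree a < degree f}"
  proof (rule inj_onI)
    fix a b :: "'a poly"
    assume "a \<in> {a. degree a < degree f}" "b \<in> {a. degree a < degree f}"
      and "residue f a = residue f b"
    then have "f dvd a - b" "degree (a - b) < degree f"
      by (simp_all add: rcos_poly_ring_eq_iff degree_diff_less)
    then show "a = b"
      using dvd_imp_degree_le[of f "a - b"] by fastforce
  qed
  then show ?thesis
    using assms by (simp add: carrier_quotient_poly_ring card_image card_degree_less)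
qed

lemma zero_quotient_poly_ring:
  "\<zero>\<^bsub>poly_quotient f\<^esub> = residue f (0 :: 'a::field poly)"
  unfolding rcos_poly_ring by (simp add: FactRing_def cgenideal_poly_ring)

lemma residue_ring_hom: "ring_hom_cring poly_ring_of (poly_quotient f) (residue (f :: 'a::field poly))"
  using cring.cgenideal_ideal[OF cring_from_type_algebra, of f]
  by (intro ideal.rcos_ring_hom_cring cring_from_type_algebra) simp

lemma quotient_poly_ring_not_field:
  fixes A B :: "'a::field poly"
  assumes "degree A > 0" "degree B > 0"
  shows "\<not> field (poly_quotient (A * B))"
proof
  let ?S = "poly_quotient (A * B)"
  assume "field ?S"
  interpret hom: ring_hom_cring poly_ring_of ?S "residue (A * B)"
    by (rule residue_ring_hom)
  have "residue (A * B) A \<otimes>\<^bsub>?S\<^esub> residue (A * B) B = residue (A * B) (A * B)"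
    using hom.hom_mult[of A B] by simp
  also have "\<dots> = \<zero>\<^bsub>?S\<^esub>"
    by (simp add: zero_quotient_poly_ring rcos_poly_ring_eq_iff)
  finally have "residue (A * B) A = \<zero>\<^bsub>?S\<^esub> \<or> residue (A * B) B = \<zero>\<^bsub>?S\<^esub>"
    using domain.integral[OF field.axioms(1)[OF \<open>field ?S\<close>]] by simp
  then have "A * B dvd A \<or> A * B dvd B"
    by (simp add: zero_quotient_poly_ring rcos_poly_ring_eq_iff)
  moreover have "A \<noteq> 0" "B \<noteq> 0"
    using assms by auto
  ultimately show False
    using assms by (auto simp: is_unit_iff_degree)
qed

lemma quotient_poly_ring_power_eq_self:
  fixes f :: "'a::{finite,field} poly"
  assumes "f dvd X\<^sub>p ^ (CARD('a) ^ n) - X\<^sub>p"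
    and "x \<in> carrier (poly_quotient f)"
  shows "x [^]\<^bsub>poly_quotient f\<^esub> (CARD('a) ^ n) = x"
proof -
  interpret hom: ring_hom_cring poly_ring_of "poly_quotient f" "residue f"
    by (rule residue_ring_hom)
  obtain a where a: "x = residue f a"
    using assms(2) by (auto simp: FactRing_def A_RCOSETS_def')
  have "f dvd a \<circ>\<^sub>p X\<^sub>p ^ (CARD('a) ^ n) - a \<circ>\<^sub>p X\<^sub>p"
    using assms(1) by (rule dvd_pcompose_cong)
  then have "residue f (a ^ (CARD('a) ^ n)) = x"
    unfolding a rcos_poly_ring_eq_iff frobenius_pow_eq_pcompose[of a n] by simp
  then show ?thesis
    using hom.hom_pow[of a "CARD('a) ^ n"] a by simp
qed

lemma carmichael_polyI:
  fixes A B :: "'a::{finite,field} poly"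
  assumes "A * B dvd X\<^sub>p ^ (CARD('a) ^ degree (A * B)) - X\<^sub>p"
    and "degree A > 0" "degree B > 0"
  shows "carmichael_poly (A * B)"
proof -
  have card: "card (carrier (poly_quotient (A * B))) = CARD('a) ^ degree (A * B)"
    using assms(2,3) by (intro card_quotient_poly_ring degree_mult_pos)
  then have "finite (carrier (poly_quotient (A * B)))"
    by (intro card_ge_0_finite) simp
  moreover have "\<not> field (poly_quotient (A * B))"
    using assms(2,3) by (rule quotient_poly_ring_not_field)
  moreover have "\<forall>x\<in>carrier (poly_quotient (A * B)).
      x [^]\<^bsub>poly_quotient (A * B)\<^esub> card (carrier (poly_quotient (A * B))) = x"
    unfolding card using quotient_poly_ring_power_eq_self[OF assms(1)] by blast
  ultimately show ?thesis
    unfolding carmichael_poly_def carmichael_ring_def by blast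
qed

section \<open>The polynomials \<open>X^(q^k) - X\<close>\<close>

definition Xq_minus_X :: "nat \<Rightarrow> 'a::{finite,field} poly" where
  "Xq_minus_X k = X\<^sub>p ^ (CARD('a) ^ k) - X\<^sub>p"

lemma dvd_power_diff: "(m :: 'a::comm_ring_1) dvd x - y \<Longrightarrow> m dvd x ^ n - y ^ n"
  unfolding power_diff_sumr2 by (rule dvd_mult2)

lemma dvd_diff_trans: "(m :: 'a::comm_ring_1) dvd a - b \<Longrightarrow> m dvd b - c \<Longrightarrow> m dvd a - c"
  using dvd_add by fastforce

lemma dvd_frobenius_pow_mult:
  fixes m y :: "'a::{finite,field} poly"
  assumes "m dvd y ^ (CARD('a) ^ a) - y"
  shows "m dvd y ^ (CARD('a) ^ (a * k)) - y"
proof (induction k)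
  case (Suc k)
  have "m dvd (y ^ (CARD('a) ^ a)) ^ (CARD('a) ^ (a * k)) - y ^ (CARD('a) ^ (a * k))"
    using assms by (rule dvd_power_diff)
  then have "m dvd (y ^ (CARD('a) ^ a)) ^ (CARD('a) ^ (a * k)) - y"
    using Suc by (rule dvd_diff_trans)
  then show ?case
    by (simp add: power_add power_mult mult.commute)
qed simp

lemma Xq_minus_X_dvd:
  "a dvd b \<Longrightarrow> (Xq_minus_X a :: 'a::{finite,field} poly) dvd Xq_minus_X b"
  unfolding Xq_minus_X_def by (elim dvdE) (simp add: dvd_frobenius_pow_mult)

text \<open>Modulo \<open>X^(q^M) - X + 1\<close> we have \<open>X^(q^M) = X - 1\<close>, hence \<open>X^(q^(M*j)) = X - j\<close>;
  take \<open>j = q\<close>.\<close>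
lemma Xq_minus_X_plus_1_dvd:
  "(Xq_minus_X M + 1 :: 'a::{finite,field} poly) dvd Xq_minus_X (M * CARD('a))"
proof -
  let ?Z = "Xq_minus_X M + 1 :: 'a poly"
  let ?q = "CARD('a)"
  have "?Z dvd X\<^sub>p ^ (?q ^ (M * j)) - (X\<^sub>p - of_nat j)" for j
  proof (induction j)
    case (Suc j)
    have "?Z dvd (X\<^sub>p ^ (?q ^ M)) ^ (?q ^ (M * j)) - (X\<^sub>p - 1) ^ (?q ^ (M * j))"
      by (rule dvd_power_diff) (simp add: Xq_minus_X_def algebra_simps)
    moreover have "(X\<^sub>p ^ (?q ^ M)) ^ (?q ^ (M * j)) = (X\<^sub>p :: 'a poly) ^ (?q ^ (M * Suc j))"
      by (simp add: power_add power_mult mult.commute)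
    ultimately have "?Z dvd X\<^sub>p ^ (?q ^ (M * Suc j)) - (X\<^sub>p ^ (?q ^ (M * j)) - 1)"
      by (simp only: frobenius_pow_diff power_one)
    moreover have "?Z dvd (X\<^sub>p ^ (?q ^ (M * j)) - 1) - (X\<^sub>p - of_nat (Suc j))"
      using Suc by (simp add: algebra_simps)
    ultimately show ?case
      by (rule dvd_diff_trans)
  qed simp
  from this[of ?q] show ?thesis
    by (simp add: Xq_minus_X_def of_nat_card_eq_0_poly)
qed

lemma coprime_Xq_minus_X_plus_1:
  fixes A :: "'a::{finite,field_gcd} poly"
  assumes "A dvd Xq_minus_X a" "a dvd b"
  shows "coprime A (Xq_minus_X b + 1)"
proof (rule coprimeI)
  fix c assume "c dvd A" "c dvd Xq_minus_X b + 1"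
  moreover have "A dvd Xq_minus_X b"
    using assms Xq_minus_X_dvd dvd_trans by blast
  ultimately have "c dvd (Xq_minus_X b + 1) - Xq_minus_X b"
    by (meson dvd_diff dvd_trans)
  then show "is_unit c"
    by simp
qed

lemma
  assumes "m > 0"
  shows degree_Xq_minus_X_plus_1: "degree (Xq_minus_X m + 1 :: 'a::{finite,field} poly) = CARD('a) ^ m"
    and lead_coeff_Xq_minus_X_plus_1: "lead_coeff (Xq_minus_X m + 1 :: 'a::{finite,field} poly) = 1"
proof -
  have "CARD('a) ^ m > 1"
    using assms card_ge_2[where 'a='a] by (intro one_less_power) auto
  then have lt: "degree (1 - X\<^sub>p :: 'a poly) < degree ((X\<^sub>p :: 'a poly) ^ (CARD('a) ^ m))"
    using degree_diff_le_max[of 1 "X\<^sub>p :: 'a poly"] by simp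
  have eq: "Xq_minus_X m + 1 = (1 - X\<^sub>p) + (X\<^sub>p :: 'a poly) ^ (CARD('a) ^ m)"
    by (simp add: Xq_minus_X_def)
  show "degree (Xq_minus_X m + 1 :: 'a poly) = CARD('a) ^ m"
    unfolding eq degree_add_eq_right[OF lt] by simp
  show "lead_coeff (Xq_minus_X m + 1 :: 'a poly) = 1"
    unfolding eq lead_coeff_add_le[OF lt] by (simp add: X_power_eq_monom degree_monom_eq)
qed

lemma squarefree_dvd_power_imp_dvd:
  fixes P Y :: "'a::factorial_semiring"
  assumes "squarefree P" "P dvd Y ^ n"
  shows "P dvd Y"
proof (cases "Y = 0")
  case False
  have "P \<noteq> 0"
    using assms(1) by auto
  then show ?thesis
  proof (rule multiplicity_le_imp_dvd)
    fix p :: 'a assume p: "prime p"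
    show "multiplicity p P \<le> multiplicity p Y"
    proof (cases "p dvd P")
      case True
      then have "p dvd Y"
        using assms(2) p dvd_trans prime_dvd_power by metis
      then have "multiplicity p Y > 0"
        using False p by (simp add: prime_multiplicity_gt_zero_iff)
      moreover have "multiplicity p P \<le> 1"
        using assms(1) \<open>P \<noteq> 0\<close> p by (simp add: squarefree_factorial_semiring'')
      ultimately show ?thesis
        by linarith
    qed (simp add: not_dvd_imp_multiplicity_0)
  qed
qed simp

section \<open>Eventual periodicity of \<open>X^(q^i)\<close> modulo a polynomial\<close>

definition frob_period :: "'a::{finite,field} poly \<Rightarrow> nat \<Rightarrow> bool" where
  "frob_period m M \<longleftrightarrow> (\<forall>E. M dvd E \<longrightarrow> 0 < E \<longrightarrow> m dvd X\<^sub>p ^ (CARD('a) ^ E) - X\<^sub>p ^ (CARD('a) ^ M))"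

lemma ex_less_eq_of_finite_range:
  assumes "finite (range (f :: nat \<Rightarrow> 'b))"
  shows "\<exists>i j. i < j \<and> f i = f j"
proof -
  obtain i j where "i \<noteq> j" "f i = f j"
    using assms finite_imageD infinite_UNIV_nat unfolding inj_on_def by blast
  then show ?thesis
    by (metis linorder_neqE_nat)
qed

lemma dvd_Xq_power_shift:
  fixes m :: "'a::{finite,field} poly"
  assumes "m dvd X\<^sub>p ^ (CARD('a) ^ (i + p)) - X\<^sub>p ^ (CARD('a) ^ i)" "i \<le> x"
  shows "m dvd X\<^sub>p ^ (CARD('a) ^ (x + k * p)) - X\<^sub>p ^ (CARD('a) ^ x)"
proof -
  let ?q = "CARD('a)"
  have step: "m dvd X\<^sub>p ^ (?q ^ (y + p)) - X\<^sub>p ^ (?q ^ y)" if iy: "i \<le> y" for y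
  proof -
    obtain d where y: "y = i + d"
      using le_Suc_ex[OF iy] by blast
    have "m dvd (X\<^sub>p ^ (?q ^ (i + p)) - X\<^sub>p ^ (?q ^ i)) ^ (?q ^ d)"
      by (rule dvd_trans[OF assms(1)]) (simp add: dvd_power)
    also have "\<dots> = X\<^sub>p ^ (?q ^ (y + p)) - X\<^sub>p ^ (?q ^ y)"
      unfolding y frobenius_pow_diff by (simp add: power_add ac_simps flip: power_mult)
    finally show ?thesis .
  qed
  show ?thesis
  proof (induction k)
    case (Suc k)
    have "m dvd X\<^sub>p ^ (?q ^ (x + k * p + p)) - X\<^sub>p ^ (?q ^ x)"
      using assms(2) by (intro dvd_diff_trans[OF step Suc]) simp
    then show ?case
      by (simp add: add_ac)
  qed simp
qed

lemma ex_frob_period: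
  fixes m :: "'a::{finite,field} poly"
  assumes "m \<noteq> 0"
  shows "\<exists>M>0. frob_period m M"
proof -
  let ?q = "CARD('a)"
  have "range (\<lambda>i. X\<^sub>p ^ (?q ^ i) mod m) \<subseteq> insert 0 {p. degree p < degree m}"
    using degree_mod_less'[OF assms] by auto
  then have "finite (range (\<lambda>i. X\<^sub>p ^ (?q ^ i) mod m))"
    by (rule finite_subset) (simp add: finite_degree_less)
  then obtain i j where "i < j" and ij: "X\<^sub>p ^ (?q ^ i) mod m = X\<^sub>p ^ (?q ^ j) mod m"
    using ex_less_eq_of_finite_range by blast
  define p where "p = j - i"
  have "p > 0" and ip: "m dvd X\<^sub>p ^ (?q ^ (i + p)) - X\<^sub>p ^ (?q ^ i)"
    using \<open>i < j\<close> ij by (simp_all add: p_def mod_eq_dvd_iff dvd_diff_commute[of m "X\<^sub>p ^ (?q ^ i)"])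
  define M where "M = p * Suc i"
  have "M > 0"
    using \<open>p > 0\<close> by (simp add: M_def)
  have "i \<le> M"
    using \<open>p > 0\<close> unfolding M_def by (cases p) simp_all
  have "m dvd X\<^sub>p ^ (?q ^ E) - X\<^sub>p ^ (?q ^ M)" if E: "M dvd E" "0 < E" for E
  proof -
    obtain t where "E = M * Suc t"
      using E by (metis dvd_def mult_0_right not0_implies_Suc less_irrefl)
    then have "E = M + (t * Suc i) * p"
      unfolding M_def by (simp add: algebra_simps)
    then show ?thesis
      using dvd_Xq_power_shift[OF ip \<open>i \<le> M\<close>, of "t * Suc i"] by simp
  qed
  then show ?thesis
    using \<open>M > 0\<close> unfolding frob_period_def by blast
qed

lemma frob_period_dvd:
  "frob_period m M \<Longrightarrow> n dvd m \<Longrightarrow> frob_period n M"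
  unfolding frob_period_def using dvd_trans by blast

lemma frob_period_cong:
  fixes m :: "'a::{finite,field} poly"
  assumes "frob_period m M" "M dvd E" "M dvd E'" "0 < E" "0 < E'"
  shows "m dvd X\<^sub>p ^ (CARD('a) ^ E) - X\<^sub>p ^ (CARD('a) ^ E')"
proof -
  have "m dvd X\<^sub>p ^ (CARD('a) ^ E) - X\<^sub>p ^ (CARD('a) ^ M)"
    "m dvd X\<^sub>p ^ (CARD('a) ^ M) - X\<^sub>p ^ (CARD('a) ^ E')"
    using assms unfolding frob_period_def by (simp_all add: dvd_diff_commute[of m "X\<^sub>p ^ (CARD('a) ^ M)"])
  then show ?thesis
    by (rule dvd_diff_trans)
qed

lemma squarefree_dvd_Xq_minus_X:
  fixes P :: "'a::{finite,field_gcd} poly"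
  assumes "squarefree P" "frob_period P M" "M > 0"
  shows "P dvd Xq_minus_X M"
proof -
  have "P dvd X\<^sub>p ^ (CARD('a) ^ (M + M)) - X\<^sub>p ^ (CARD('a) ^ M)"
    using assms(2,3) unfolding frob_period_def by simp
  also have "\<dots> = Xq_minus_X M ^ (CARD('a) ^ M)"
    by (simp add: Xq_minus_X_def frobenius_pow_diff power_add power_mult)
  finally show ?thesis
    by (rule squarefree_dvd_power_imp_dvd[OF assms(1)])
qed

section \<open>Frobenius sums\<close>

definition frob_sum :: "nat \<Rightarrow> 'a::{finite,field} poly \<Rightarrow> 'a poly" where
  "frob_sum E a = (\<Sum>i\<le>CARD('a). a ^ (CARD('a) ^ (E * i)))"

lemma frob_sum_diff: "frob_sum E (a - b) = frob_sum E a - frob_sum E b"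
  unfolding frob_sum_def by (simp add: frobenius_pow_diff sum_subtractf)

lemma frob_sum_frobenius_pow:
  fixes a :: "'a::{finite,field} poly"
  shows "frob_sum E a ^ (CARD('a) ^ k) = frob_sum E (a ^ (CARD('a) ^ k))"
  unfolding frob_sum_def frobenius_pow_sum
  by (intro sum.cong refl) (simp flip: power_mult power_add add: ac_simps)

lemma frob_sum_telescope:
  fixes v :: "'a::{finite,field} poly"
  shows "frob_sum E v ^ (CARD('a) ^ E) - frob_sum E v = v ^ (CARD('a) ^ (E * Suc CARD('a))) - v"
proof -
  let ?f = "\<lambda>i. v ^ (CARD('a) ^ (E * i))"
  have "frob_sum E v ^ (CARD('a) ^ E) = (\<Sum>i<Suc CARD('a). ?f (Suc i))"
    unfolding frob_sum_def frobenius_pow_sum lessThan_Suc_atMost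
    by (intro sum.cong refl) (simp flip: power_mult power_add add: ac_simps)
  then have "frob_sum E v ^ (CARD('a) ^ E) - frob_sum E v = (\<Sum>i<Suc CARD('a). ?f (Suc i) - ?f i)"
    unfolding frob_sum_def lessThan_Suc_atMost by (simp add: sum_subtractf)
  also have "\<dots> = ?f (Suc CARD('a)) - ?f 0"
    by (rule sum_lessThan_telescope)
  finally show ?thesis
    by simp
qed

lemma pcompose_X_power [simp]: "(X\<^sub>p ^ n) \<circ>\<^sub>p a = a ^ n"
  by (induction n) (simp_all add: pcompose_mult pcompose_pCons pcompose_1)

lemma
  assumes "E > 0"
  shows degree_frob_sum_X: "degree (frob_sum E X\<^sub>p :: 'a::{finite,field} poly) = CARD('a) ^ (E * CARD('a))"
    and lead_coeff_frob_sum_X: "lead_coeff (frob_sum E X\<^sub>p :: 'a::{finite,field} poly) = 1"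
proof -
  let ?q = "CARD('a)"
  have eq: "frob_sum E X\<^sub>p = (\<Sum>i<?q. (X\<^sub>p :: 'a poly) ^ (?q ^ (E * i))) + X\<^sub>p ^ (?q ^ (E * ?q))"
    unfolding frob_sum_def lessThan_Suc_atMost[symmetric] by simp
  have "degree (\<Sum>i<?q. (X\<^sub>p :: 'a poly) ^ (?q ^ (E * i))) < ?q ^ (E * ?q)"
  proof (rule degree_sum_less)
    fix i assume "i \<in> {..<?q}"
    then have "?q ^ (E * i) < ?q ^ (E * ?q)"
      using assms card_ge_2[where 'a='a] by (intro power_strict_increasing) auto
    then show "degree ((X\<^sub>p :: 'a poly) ^ (?q ^ (E * i))) < ?q ^ (E * ?q)"
      by simp
  qed simp
  then have lt: "degree (\<Sum>i<?q. (X\<^sub>p :: 'a poly) ^ (?q ^ (E * i))) < degree ((X\<^sub>p :: 'a poly) ^ (?q ^ (E * ?q)))"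
    by simp
  show "degree (frob_sum E X\<^sub>p :: 'a poly) = ?q ^ (E * ?q)"
    unfolding eq degree_add_eq_right[OF lt] by simp
  show "lead_coeff (frob_sum E X\<^sub>p :: 'a poly) = 1"
    unfolding eq lead_coeff_add_le[OF lt] by (simp add: X_power_eq_monom degree_monom_eq)
qed

lemma frob_sum_X_cong:
  fixes g :: "'a::{finite,field} poly"
  assumes "frob_period g M" "M dvd E" "E > 0"
  shows "g dvd frob_sum E X\<^sub>p - X\<^sub>p"
proof -
  let ?q = "CARD('a)"
  let ?B = "(X\<^sub>p :: 'a poly) ^ (?q ^ E)"
  have "frob_sum E X\<^sub>p = X\<^sub>p + (\<Sum>i<?q. (X\<^sub>p :: 'a poly) ^ (?q ^ (E * Suc i)))"
    unfolding frob_sum_def lessThan_Suc_atMost[symmetric] sum.lessThan_Suc_shift by simp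
  also have "(\<Sum>i<?q. (X\<^sub>p :: 'a poly) ^ (?q ^ (E * Suc i)))
      = (\<Sum>i<?q. X\<^sub>p ^ (?q ^ (E * Suc i)) - ?B) + of_nat ?q * ?B"
    by (simp add: sum_subtractf)
  finally have "frob_sum E X\<^sub>p - X\<^sub>p = (\<Sum>i<?q. X\<^sub>p ^ (?q ^ (E * Suc i)) - ?B)"
    by (simp add: of_nat_card_eq_0_poly)
  moreover have "g dvd (\<Sum>i<?q. X\<^sub>p ^ (?q ^ (E * Suc i)) - ?B)"
    using assms by (intro dvd_sum frob_period_cong) auto
  ultimately show ?thesis
    by simp
qed

text \<open>With \<open>v = X^(q^K) - X\<close> one has \<open>X^(q^(K*j)) = X + (\<Sum>i<j. v^(q^(K*i)))\<close>, and
  modulo \<open>m\<close> the summands are periodic in \<open>i\<close> with period \<open>N\<close>; a full sum over \<open>q\<close>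
  periods is therefore \<open>q\<close> times a sum, i.e. zero.\<close>
lemma dvd_Xq_minus_X_of_dvd_frobenius_pow:
  fixes m :: "'a::{finite,field} poly"
  assumes "m dvd Xq_minus_X K ^ (CARD('a) ^ N) - Xq_minus_X K"
  shows "m dvd Xq_minus_X (K * (N * CARD('a)))"
proof -
  let ?q = "CARD('a)"
  define v :: "'a poly" where "v = Xq_minus_X K"
  define w where "w i = v ^ (?q ^ (K * i))" for i
  have telescope: "X\<^sub>p ^ (?q ^ (K * j)) = X\<^sub>p + (\<Sum>i<j. w i)" for j
  proof (induction j)
    case (Suc j)
    have "(X\<^sub>p :: 'a poly) ^ (?q ^ (K * Suc j)) = (X\<^sub>p + v) ^ (?q ^ (K * j))"
      by (simp add: v_def Xq_minus_X_def power_add power_mult mult.commute)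
    then show ?case
      using Suc by (simp add: frobenius_pow_add w_def)
  qed simp
  have periodic: "m dvd w (k * N + i) - w i" for k i
  proof -
    have "m dvd v ^ (?q ^ (N * (K * k))) - v"
      using assms unfolding v_def by (rule dvd_frobenius_pow_mult)
    then have "m dvd (v ^ (?q ^ (N * (K * k)))) ^ (?q ^ (K * i)) - v ^ (?q ^ (K * i))"
      by (rule dvd_power_diff)
    moreover have "K * (k * N + i) = N * (K * k) + K * i"
      by (simp add: algebra_simps)
    ultimately show ?thesis
      unfolding w_def by (simp only: power_add power_mult)
  qed
  have "(\<Sum>i<?q * N. w i) = (\<Sum>k<?q. \<Sum>i\<in>{k * N..<k * N + N}. w i)"
    by (rule sum.nat_group[symmetric])
  also have "\<dots> = (\<Sum>k<?q. \<Sum>i<N. w (k * N + i))"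
    by (simp add: sum.atLeastLessThan_shift_0[of w] atLeast0LessThan comp_def)
  finally have blocks: "(\<Sum>i<N * ?q. w i) = (\<Sum>k<?q. \<Sum>i<N. w (k * N + i))"
    by (simp only: mult.commute)
  have "m dvd (\<Sum>k<?q. \<Sum>i<N. w (k * N + i) - w i)"
    by (intro dvd_sum periodic)
  then have "m dvd (\<Sum>k<?q. \<Sum>i<N. w (k * N + i)) - (\<Sum>k<?q. \<Sum>i<N. w i)"
    by (simp only: sum_subtractf)
  moreover have "(\<Sum>k<?q. \<Sum>i<N. w i) = 0"
    by (simp add: of_nat_card_eq_0_poly)
  ultimately have "m dvd (\<Sum>i<N * ?q. w i)"
    unfolding blocks by (metis diff_zero)
  then show ?thesis
    using telescope[of "N * ?q"] by (simp add: Xq_minus_X_def)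
qed

lemma pcompose_frob_sum_dvd_Xq_minus_X:
  fixes f :: "'a::{finite,field} poly"
  assumes "f dvd Xq_minus_X K"
  shows "f \<circ>\<^sub>p frob_sum E X\<^sub>p dvd Xq_minus_X (K * (E * Suc CARD('a) * CARD('a)))"
proof -
  let ?q = "CARD('a)"
  let ?L = "frob_sum E X\<^sub>p :: 'a poly"
  have "f \<circ>\<^sub>p ?L dvd Xq_minus_X K \<circ>\<^sub>p ?L"
    using assms by (elim dvdE) (simp add: pcompose_mult)
  also have "Xq_minus_X K \<circ>\<^sub>p ?L = ?L ^ (?q ^ K) - ?L"
    by (simp add: Xq_minus_X_def pcompose_diff pcompose_pCons)
  also have "\<dots> = frob_sum E (Xq_minus_X K)"
    by (simp add: Xq_minus_X_def frob_sum_diff frob_sum_frobenius_pow)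
  also have "frob_sum E (Xq_minus_X K) dvd frob_sum E (Xq_minus_X K :: 'a poly) ^ (?q ^ E) - frob_sum E (Xq_minus_X K)"
    by (intro dvd_diff dvd_power) simp_all
  also have "\<dots> = Xq_minus_X K ^ (?q ^ (E * Suc ?q)) - Xq_minus_X K"
    by (rule frob_sum_telescope)
  finally show ?thesis
    by (rule dvd_Xq_minus_X_of_dvd_frobenius_pow)
qed

section \<open>An infinite family of Carmichael polynomials\<close>

lemma carmichael_poly_pcompose_frob_sum:
  fixes A B :: "'a::{finite,field} poly"
  assumes "A * B dvd Xq_minus_X N" "degree A > 0" "degree B > 0" "E > 0"
    and "N * E * Suc CARD('a) * CARD('a) dvd degree (A * B) * CARD('a) ^ (E * CARD('a))"
  shows "carmichael_poly ((A * B) \<circ>\<^sub>p frob_sum E X\<^sub>p)"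
proof -
  let ?q = "CARD('a)"
  let ?L = "frob_sum E X\<^sub>p :: 'a poly"
  have degL: "degree ?L = ?q ^ (E * ?q)"
    using assms(4) by (rule degree_frob_sum_X)
  have "(A * B) \<circ>\<^sub>p ?L dvd Xq_minus_X (N * (E * Suc ?q * ?q))"
    using assms(1) by (rule pcompose_frob_sum_dvd_Xq_minus_X)
  also have "\<dots> dvd Xq_minus_X (degree ((A * B) \<circ>\<^sub>p ?L))"
    using assms(5) by (intro Xq_minus_X_dvd) (simp only: degree_pcompose degL mult.assoc)
  finally have "(A \<circ>\<^sub>p ?L) * (B \<circ>\<^sub>p ?L) dvd X\<^sub>p ^ (?q ^ degree ((A \<circ>\<^sub>p ?L) * (B \<circ>\<^sub>p ?L))) - X\<^sub>p"
    by (simp add: pcompose_mult Xq_minus_X_def)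
  moreover have "degree (A \<circ>\<^sub>p ?L) > 0" "degree (B \<circ>\<^sub>p ?L) > 0"
    using assms(2,3) card_ge_2[where 'a='a] by (simp_all add: degree_pcompose degL)
  ultimately show ?thesis
    unfolding pcompose_mult by (rule carmichael_polyI)
qed

text \<open>The choice \<open>E = M * q^(e + t)\<close> makes the exponent \<open>E * q\<close> large enough to absorb the
  factor \<open>q^(t + 1)\<close> by which \<open>N * E * (q + 1) * q\<close> exceeds \<open>N * M * (q + 1)\<close>.\<close>
lemma carmichael_poly_pcompose_frob_sum_power:
  fixes A B :: "'a::{finite,field} poly"
  assumes "M > 0" "degree A > 0" "degree B > 0" "A * B dvd Xq_minus_X N"
    and "N * M * Suc CARD('a) dvd degree (A * B) * CARD('a) ^ e"
  shows "carmichael_poly ((A * B) \<circ>\<^sub>p frob_sum (M * CARD('a) ^ (e + t)) X\<^sub>p)"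
proof -
  let ?q = "CARD('a)"
  let ?E = "M * ?q ^ (e + t)"
  have q2: "?q \<ge> 2"
    by (rule card_ge_2)
  have "e + t < 2 ^ (e + t)"
    by (rule less_exp)
  moreover have "2 ^ Suc (e + t) \<le> ?q ^ Suc (e + t)"
    using q2 by (rule power_mono) simp
  ultimately have "e + Suc (e + t) \<le> ?q ^ Suc (e + t)"
    by (simp only: power_Suc)
  also have "\<dots> \<le> ?E * ?q"
    using assms(1) by simp
  finally have "?q ^ (e + Suc (e + t)) dvd ?q ^ (?E * ?q)"
    by (rule le_imp_power_dvd)
  then have "degree (A * B) * ?q ^ (e + Suc (e + t)) dvd degree (A * B) * ?q ^ (?E * ?q)"
    by (rule mult_dvd_mono[OF dvd_refl])
  then have "degree (A * B) * ?q ^ e * ?q ^ Suc (e + t) dvd degree (A * B) * ?q ^ (?E * ?q)"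
    by (simp only: power_add mult.assoc)
  with assms(5) have "N * M * Suc ?q * ?q ^ Suc (e + t) dvd degree (A * B) * ?q ^ (?E * ?q)"
    by (meson dvd_trans mult_dvd_mono dvd_refl)
  moreover have "N * M * Suc ?q * ?q ^ Suc (e + t) = N * ?E * Suc ?q * ?q"
    by (simp add: algebra_simps)
  ultimately have "N * ?E * Suc ?q * ?q dvd degree (A * B) * ?q ^ (?E * ?q)"
    by (simp only:)
  moreover have "?E > 0"
    using assms(1) by simp
  ultimately show ?thesis
    using assms(2-4) carmichael_poly_pcompose_frob_sum by blast
qed

lemma infinite_carmichael_polys_cong:
  fixes A B g :: "'a::{finite,field} poly"
  assumes "frob_period g M" "M > 0"
    and "lead_coeff (A * B) = 1" "degree A > 0" "degree B > 0" "A * B dvd Xq_minus_X N"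
    and "N * M * Suc CARD('a) dvd degree (A * B) * CARD('a) ^ e"
  shows "infinite {f. lead_coeff f = 1 \<and> carmichael_poly f \<and> f mod g = (A * B) mod g}"
proof -
  let ?q = "CARD('a)"
  define E where "E t = M * ?q ^ (e + t)" for t
  define F where "F t = (A * B) \<circ>\<^sub>p frob_sum (E t) X\<^sub>p" for t
  have q2: "?q \<ge> 2"
    by (rule card_ge_2)
  have E: "E t > 0" "M dvd E t" for t
    using assms(2) by (simp_all add: E_def)
  have "F t \<in> {f. lead_coeff f = 1 \<and> carmichael_poly f \<and> f mod g = (A * B) mod g}" for t
  proof (intro CollectI conjI)
    have "degree (frob_sum (E t) X\<^sub>p :: 'a poly) > 0"
      using q2 by (simp add: degree_frob_sum_X[OF E(1)])
    then show "lead_coeff (F t) = 1"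
      using assms(3) by (simp add: F_def lead_coeff_comp lead_coeff_frob_sum_X[OF E(1)])
    have "g dvd F t - (A * B) \<circ>\<^sub>p X\<^sub>p"
      unfolding F_def using assms(1) E by (intro dvd_pcompose_cong frob_sum_X_cong)
    then show "F t mod g = (A * B) mod g"
      by (simp add: mod_eq_dvd_iff)
    show "carmichael_poly (F t)"
      unfolding F_def E_def using assms(2,4-7) by (rule carmichael_poly_pcompose_frob_sum_power)
  qed
  then have "range F \<subseteq> {f. lead_coeff f = 1 \<and> carmichael_poly f \<and> f mod g = (A * B) mod g}"
    by blast
  moreover have "inj F"
  proof (rule injI)
    fix s t assume "F s = F t"
    moreover have "degree (F t) = degree (A * B) * ?q ^ (E t * ?q)" for t
      by (simp add: F_def degree_pcompose degree_frob_sum_X[OF E(1)])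
    moreover have "degree (A * B) > 0"
      using assms(4,5) by (rule degree_mult_pos)
    ultimately have "?q ^ (E s * ?q) = ?q ^ (E t * ?q)"
      by (metis mult_left_cancel not_gr0)
    then show "s = t"
      using q2 assms(2) by (simp add: E_def power_inject_exp)
  qed
  ultimately show ?thesis
    using infinite_super range_inj_infinite by blast
qed

section \<open>Monic squarefree polynomials in a residue class\<close>

lemma ex_avoiding_residues:
  fixes S :: "'a::factorial_ring_gcd set"
  assumes "finite S" "\<forall>\<pi>\<in>S. prime \<pi>"
  shows "\<exists>w. \<forall>\<pi>\<in>S. \<not> \<pi> dvd w - r \<pi>"
  using assms
proof (induction S rule: finite_induct)
  case (insert p S)
  then obtain w where w: "\<forall>\<pi>\<in>S. \<not> \<pi> dvd w - r \<pi>"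
    by auto
  show ?case
  proof (cases "p dvd w - r p")
    case True
    have "\<not> p dvd \<Prod>S"
    proof
      assume "p dvd \<Prod>S"
      then obtain s where "s \<in> S" "p dvd s"
        using insert by (auto simp: prime_dvd_prod_iff)
      then show False
        using insert primes_dvd_imp_eq[of p s] by auto
    qed
    have "\<not> p dvd (w + \<Prod>S) - r p"
    proof
      assume "p dvd (w + \<Prod>S) - r p"
      then have "p dvd ((w + \<Prod>S) - r p) - (w - r p)"
        using True by (rule dvd_diff)
      then show False
        using \<open>\<not> p dvd \<Prod>S\<close> by simp
    qed
    moreover have "\<not> \<pi> dvd (w + \<Prod>S) - r \<pi>" if "\<pi> \<in> S" for \<pi>
    proof
      assume "\<pi> dvd (w + \<Prod>S) - r \<pi>"
      moreover have "\<pi> dvd \<Prod>S"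
        using insert.hyps(1) that by (rule dvd_prodI)
      ultimately have "\<pi> dvd ((w + \<Prod>S) - r \<pi>) - \<Prod>S"
        by (rule dvd_diff)
      then show False
        using w that by simp
    qed
    ultimately show ?thesis
      by blast
  qed (use w in auto)
qed simp

lemma ex_avoiding_classes:
  fixes S :: "'a::factorial_ring_gcd set"
  assumes "finite S" "\<forall>\<pi>\<in>S. prime \<pi>"
    and "\<forall>\<pi>\<in>S. \<forall>a b. B \<pi> a \<longrightarrow> B \<pi> b \<longrightarrow> \<pi> dvd a - b"
  shows "\<exists>w. \<forall>\<pi>\<in>S. \<forall>s. \<not> B \<pi> (w + \<Prod>S * s)"
proof -
  define r where "r \<pi> = (SOME a. B \<pi> a)" for \<pi>
  obtain w where w: "\<forall>\<pi>\<in>S. \<not> \<pi> dvd w - r \<pi>"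
    using ex_avoiding_residues[OF assms(1,2)] by blast
  have "\<not> B \<pi> (w + \<Prod>S * s)" if "\<pi> \<in> S" for \<pi> s
  proof
    assume B: "B \<pi> (w + \<Prod>S * s)"
    then have "B \<pi> (r \<pi>)"
      unfolding r_def by (rule someI)
    then have "\<pi> dvd (w + \<Prod>S * s) - r \<pi>"
      using assms(3) that B by blast
    moreover have "\<pi> dvd \<Prod>S"
      using assms(1) that by (rule dvd_prodI)
    then have "\<pi> dvd \<Prod>S * s"
      by simp
    ultimately have "\<pi> dvd ((w + \<Prod>S * s) - r \<pi>) - \<Prod>S * s"
      by (rule dvd_diff)
    then have "\<pi> dvd w - r \<pi>"
      by simp
    then show False
      using w that by blast
  qed
  then show ?thesis
    by blast
qed

definition euler_defect :: "'a::idom poly \<Rightarrow> 'a poly" where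
  "euler_defect Y = Y - X\<^sub>p * pderiv Y"

lemma euler_defect_add: "euler_defect (Y + Z) = euler_defect Y + euler_defect Z"
  by (simp add: euler_defect_def pderiv_add algebra_simps)

lemma euler_defect_X_mult: "euler_defect (X\<^sub>p * Z) = - (X\<^sub>p * (X\<^sub>p * pderiv Z))"
  by (simp add: euler_defect_def pderiv_mult pderiv_pCons algebra_simps)

lemma square_dvd_imp_dvd_pderiv:
  fixes \<pi> P :: "'a::idom poly"
  assumes "\<pi> ^ 2 dvd P"
  shows "\<pi> dvd pderiv P"
proof -
  obtain Q where "P = \<pi> ^ 2 * Q"
    using assms by (rule dvdE)
  then have "P = \<pi> * (\<pi> * Q)"
    by (simp add: power2_eq_square mult.assoc)
  then show ?thesis
    by (simp add: pderiv_mult)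
qed

lemma
  fixes H Y :: "'a::idom poly"
  assumes "pderiv Y = 0"
  shows pderiv_add_X_mult: "pderiv (H + X\<^sub>p * Y) = pderiv H + Y"
    and euler_defect_add_X_mult: "euler_defect (H + X\<^sub>p * Y) = euler_defect H"
  using assms by (simp_all add: euler_defect_def pderiv_add pderiv_mult pderiv_pCons algebra_simps)

lemma ex_euler_defect_nonzero:
  fixes H Z :: "'a::idom poly"
  assumes "Z \<noteq> 0"
  shows "\<exists>s. euler_defect (H + Z * s) \<noteq> 0"
proof (rule ccontr)
  assume "\<nexists>s. euler_defect (H + Z * s) \<noteq> 0"
  then have zero: "euler_defect (H + Z * s) = 0" for s
    by blast
  have "euler_defect Z = 0"
    using zero[of 0] zero[of 1] by (simp add: euler_defect_add)
  then have "Z = X\<^sub>p * pderiv Z"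
    by (simp add: euler_defect_def)
  then have "euler_defect (Z * X\<^sub>p) = - (X\<^sub>p * Z)"
    by (metis euler_defect_X_mult mult.commute)
  then have "euler_defect (H + Z * X\<^sub>p) = - (X\<^sub>p * Z)"
    using zero[of 0] by (simp add: euler_defect_add)
  then show False
    using zero[of X\<^sub>p] assms by simp
qed

lemma prime_square_dvd_unique_class:
  fixes g h :: "'a::factorial_ring_gcd"
  assumes "squarefree (gcd g h)" "prime \<pi>" "\<pi> dvd g"
    and "\<pi> ^ 2 dvd h + g * a" "\<pi> ^ 2 dvd h + g * b"
  shows "\<pi> dvd a - b"
proof -
  obtain u where g: "g = \<pi> * u"
    using assms(3) by (elim dvdE)
  have "\<not> \<pi> dvd u"
  proof
    assume "\<pi> dvd u"
    then have "\<pi> ^ 2 dvd g"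
      by (simp add: g power2_eq_square)
    moreover from this have "\<pi> ^ 2 dvd h"
      using assms(4) by (metis dvd_add_right_iff dvd_mult2 add.commute)
    ultimately have "\<pi> ^ 2 dvd gcd g h"
      by simp
    then show False
      using assms(1,2) squarefreeD not_prime_unit by blast
  qed
  have "\<pi> ^ 2 dvd (h + g * a) - (h + g * b)"
    using assms(4,5) by (rule dvd_diff)
  then have "\<pi> * \<pi> dvd \<pi> * (u * (a - b))"
    by (simp add: g power2_eq_square algebra_simps)
  then have "\<pi> dvd u * (a - b)"
    using assms(2) by (simp add: dvd_mult_cancel_left)
  then show ?thesis
    using \<open>\<not> \<pi> dvd u\<close> assms(2) by (simp add: prime_dvd_mult_iff)
qed

lemma ex_cong_not_prime_square_dvd:
  fixes g h :: "'a::field_gcd poly"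
  assumes "g \<noteq> 0" "squarefree (gcd g h)"
  shows "\<exists>H. g dvd H - h \<and> (\<forall>\<pi>. prime \<pi> \<longrightarrow> \<pi> dvd g \<longrightarrow> \<not> \<pi> ^ 2 dvd H) \<and> euler_defect H \<noteq> 0"
proof -
  let ?S = "prime_factors g"
  obtain w where w: "\<forall>\<pi>\<in>?S. \<forall>s. \<not> \<pi> ^ 2 dvd h + g * (w + \<Prod>?S * s)"
    using ex_avoiding_classes[of ?S "\<lambda>\<pi> c. \<pi> ^ 2 dvd h + g * c"]
      prime_square_dvd_unique_class[OF assms(2)] by (auto simp: in_prime_factors_iff)
  have "g * \<Prod>?S \<noteq> 0"
    using assms(1) by (auto simp: prod_zero_iff)
  then obtain s where "euler_defect ((h + g * w) + (g * \<Prod>?S) * s) \<noteq> 0"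
    using ex_euler_defect_nonzero by blast
  moreover have "(h + g * w) + (g * \<Prod>?S) * s = h + g * (w + \<Prod>?S * s)"
    by (simp add: algebra_simps)
  ultimately show ?thesis
    using w assms(1) by (intro exI[of _ "h + g * (w + \<Prod>?S * s)"]) (auto simp: in_prime_factors_iff)
qed

lemma ex_monic_shift:
  fixes g M w0 :: "'a::field poly"
  assumes "g \<noteq> 0" "M \<noteq> 0"
  shows "\<exists>s. lead_coeff (g * (w0 + M * s)) = 1 \<and> d < degree (w0 + M * s)"
proof -
  define c where "c = inverse (lead_coeff g * lead_coeff M)"
  define s where "s = monom c (degree w0 + d + 1)"
  have "c \<noteq> 0"
    using assms by (simp add: c_def)
  then have degMs: "degree (M * s) = degree M + (degree w0 + d + 1)"
    using assms(2) by (simp add: s_def degree_mult_eq degree_monom_eq)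
  then have lt: "degree w0 < degree (M * s)"
    by simp
  have "lead_coeff (g * (w0 + M * s)) = lead_coeff g * (lead_coeff M * c)"
    using lead_coeff_add_le[OF lt] \<open>c \<noteq> 0\<close>
    by (simp add: lead_coeff_mult s_def degree_monom_eq)
  also have "\<dots> = 1"
    using assms by (simp add: c_def field_simps)
  finally show ?thesis
    using degree_add_eq_right[OF lt] degMs by auto
qed

text \<open>As \<open>P = H + X * (g * w)^q\<close> has \<open>P - X * P' = H - X * H'\<close>, a repeated prime factor of \<open>P\<close>
  divides \<open>H - X * H'\<close> as well as \<open>P' = H' + (g * w)^q\<close>.\<close>
lemma squarefree_add_X_mult_power:
  fixes g H w :: "'a::{finite,field_gcd} poly"
  assumes "euler_defect H \<noteq> 0" "\<forall>\<pi>. prime \<pi> \<longrightarrow> \<pi> dvd g \<longrightarrow> \<not> \<pi> ^ 2 dvd H"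
    and "\<forall>\<pi>\<in>prime_factors (euler_defect H). \<pi> dvd g \<or> \<not> \<pi> dvd pderiv H + (g * w) ^ CARD('a)"
  shows "squarefree (H + X\<^sub>p * (g * w) ^ CARD('a))"
proof (rule squarefreeI, rule ccontr)
  let ?Y = "(g * w) ^ CARD('a)"
  fix x assume x: "x ^ 2 dvd H + X\<^sub>p * ?Y" "\<not> x dvd 1"
  have ED: "euler_defect (H + X\<^sub>p * ?Y) = euler_defect H"
    by (rule euler_defect_add_X_mult) simp
  moreover have "euler_defect (0 :: 'a poly) = 0"
    by (simp add: euler_defect_def)
  ultimately have "H + X\<^sub>p * ?Y \<noteq> 0"
    using assms(1) by metis
  then have "x \<noteq> 0"
    using x(1) by auto
  then obtain \<pi> where "\<pi> dvd x" "prime \<pi>"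
    using prime_divisor_exists x(2) by blast
  then have \<pi>P: "\<pi> ^ 2 dvd H + X\<^sub>p * ?Y"
    using x(1) dvd_power_same dvd_trans by metis
  then have "\<pi> dvd H + X\<^sub>p * ?Y"
    using dvd_power[of 2 \<pi>] dvd_trans by auto
  moreover have PD: "pderiv (H + X\<^sub>p * ?Y) = pderiv H + ?Y"
    by (rule pderiv_add_X_mult) simp
  then have deriv: "\<pi> dvd pderiv H + ?Y"
    using square_dvd_imp_dvd_pderiv[OF \<pi>P] by simp
  ultimately have "\<pi> dvd (H + X\<^sub>p * ?Y) - X\<^sub>p * (pderiv H + ?Y)"
    by (metis dvd_diff dvd_mult)
  then have "\<pi> dvd euler_defect (H + X\<^sub>p * ?Y)"
    by (simp only: euler_defect_def PD)
  then have "\<pi> dvd euler_defect H"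
    by (simp only: ED)
  then have "\<pi> \<in> prime_factors (euler_defect H)"
    using assms(1) \<open>prime \<pi>\<close> by (simp add: in_prime_factors_iff)
  with assms(3) deriv have "\<pi> dvd g"
    by blast
  then have "\<pi> ^ 2 dvd (g * w) ^ 2"
    by (simp add: dvd_power_same)
  also have "\<dots> dvd ?Y"
    using card_ge_2[where 'a='a] by (simp add: le_imp_power_dvd)
  finally have "\<pi> ^ 2 dvd H + X\<^sub>p * ?Y - X\<^sub>p * ?Y"
    using \<pi>P by (intro dvd_diff dvd_mult)
  then show False
    using assms(2) \<open>prime \<pi>\<close> \<open>\<pi> dvd g\<close> by simp
qed

lemma ex_monic_squarefree_cong:
  fixes g h :: "'a::{finite,field_gcd} poly"
  assumes "g \<noteq> 0" "squarefree (gcd g h)"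
  shows "\<exists>P. lead_coeff P = 1 \<and> squarefree P \<and> P mod g = h mod g"
proof -
  let ?q = "CARD('a)"
  obtain H where Hh: "g dvd H - h" and Hg: "\<forall>\<pi>. prime \<pi> \<longrightarrow> \<pi> dvd g \<longrightarrow> \<not> \<pi> ^ 2 dvd H"
    and HD: "euler_defect H \<noteq> 0"
    using ex_cong_not_prime_square_dvd[OF assms] by blast
  let ?S = "prime_factors (euler_defect H)"
  let ?B = "\<lambda>\<pi> w. \<not> \<pi> dvd g \<and> \<pi> dvd pderiv H + (g * w) ^ ?q"
  have unique: "\<pi> dvd a - b" if "\<pi> \<in> ?S" "?B \<pi> a" "?B \<pi> b" for \<pi> a b
  proof -
    have "prime \<pi>"
      using that(1) by auto
    have "\<pi> dvd (pderiv H + (g * a) ^ ?q) - (pderiv H + (g * b) ^ ?q)"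
      using that(2,3) by (intro dvd_diff) auto
    then have "\<pi> dvd (g * a - g * b) ^ ?q"
      using frobenius_pow_diff[of "g * a" "g * b" 1] by simp
    then have "\<pi> dvd g * (a - b)"
      using \<open>prime \<pi>\<close> prime_dvd_power by (metis right_diff_distrib)
    then show ?thesis
      using \<open>prime \<pi>\<close> that(2) by (simp add: prime_dvd_mult_iff)
  qed
  obtain w0 where w0: "\<forall>\<pi>\<in>?S. \<forall>s. \<not> ?B \<pi> (w0 + \<Prod>?S * s)"
    using ex_avoiding_classes[of ?S ?B] unique by auto
  have "\<Prod>?S \<noteq> 0"
    by (auto simp: prod_zero_iff)
  then obtain s where lc: "lead_coeff (g * (w0 + \<Prod>?S * s)) = 1"
    and deg: "degree H < degree (w0 + \<Prod>?S * s)"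
    using ex_monic_shift[OF assms(1)] by blast
  define w where "w = w0 + \<Prod>?S * s"
  have "w \<noteq> 0"
    using lc by (auto simp: w_def)
  have lcY: "lead_coeff ((g * w) ^ ?q) = 1"
    using lc by (simp add: w_def lead_coeff_power)
  have "degree H < degree w"
    using deg by (simp add: w_def)
  also have "\<dots> \<le> degree (g * w)"
    using assms(1) \<open>w \<noteq> 0\<close> by (simp add: degree_mult_eq)
  also have "\<dots> \<le> ?q * degree (g * w)"
    using mult_le_mono1[of 1 ?q "degree (g * w)"] card_ge_2[where 'a='a] by simp
  also have "\<dots> < degree (X\<^sub>p * (g * w) ^ ?q)"
    using assms(1) \<open>w \<noteq> 0\<close> by (simp add: degree_mult_eq degree_power_eq)
  finally have lt: "degree H < degree (X\<^sub>p * (g * w) ^ ?q)" .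
  have "g dvd (g * w) ^ ?q"
    by (rule dvd_trans[OF dvd_triv_left dvd_power]) simp
  then have "g dvd (H - h) + X\<^sub>p * (g * w) ^ ?q"
    by (rule dvd_add[OF Hh dvd_mult])
  moreover have "lead_coeff (H + X\<^sub>p * (g * w) ^ ?q) = 1"
    unfolding lead_coeff_add_le[OF lt] lead_coeff_mult using lcY by simp
  moreover have "squarefree (H + X\<^sub>p * (g * w) ^ ?q)"
    using HD Hg w0 unfolding w_def by (intro squarefree_add_X_mult_power) auto
  ultimately show ?thesis
    by (intro exI[of _ "H + X\<^sub>p * (g * w) ^ ?q"]) (simp add: mod_eq_dvd_iff algebra_simps)
qed

section \<open>Arithmetic of the degrees\<close>

lemma ex_coprime_part:
  fixes q W :: nat
  assumes "W > 0"
  shows "\<exists>T s e. W = T * s \<and> coprime T q \<and> s dvd q ^ e"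
  using assms
proof (induction W rule: less_induct)
  case (less W)
  show ?case
  proof (cases "coprime W q")
    case False
    define d where "d = gcd W q"
    obtain W' where W: "W = d * W'"
      unfolding d_def using gcd_dvd1 by (rule dvdE)
    have "d \<noteq> 1" "d > 0"
      using False less.prems by (simp_all add: d_def coprime_iff_gcd_eq_1)
    then have "W' < W" "W' > 0"
      using W less.prems by auto
    then obtain T s e where "W' = T * s" "coprime T q" "s dvd q ^ e"
      using less.IH by blast
    moreover have "d * s dvd q ^ Suc e"
      using \<open>s dvd q ^ e\<close> by (simp add: d_def mult_dvd_mono)
    ultimately have "W = T * (d * s) \<and> coprime T q \<and> d * s dvd q ^ Suc e"
      using W by (simp add: ac_simps)
    then show ?thesis
      by blast
  qed (intro exI[of _ W] exI[of _ 1] exI[of _ 0], simp)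
qed

lemma ex_multiple_cong:
  fixes b u T D :: nat
  assumes "T > 0" "b > 0" "coprime (b * u) T"
  shows "\<exists>c\<ge>2. b dvd c \<and> T dvd D + c * u"
proof (cases "u = 0")
  case False
  then have "b * u \<noteq> 0"
    using assms(2) by simp
  then obtain x y where "b * u * x = T * y + gcd (b * u) T"
    using bezout_nat by blast
  then have xy: "b * u * x = T * y + 1"
    using assms(3) by simp
  define r where "r = T - D mod T"
  define c where "c = b * (x * r + 2 * T)"
  have "c * u = (b * u * x) * r + T * (2 * (b * u))"
    by (simp add: c_def algebra_simps)
  also have "\<dots> = r + T * (y * r + 2 * (b * u))"
    unfolding xy by (simp add: algebra_simps)
  finally have cu: "c * u = r + T * (y * r + 2 * (b * u))" .
  have "D mod T < T" "D = T * (D div T) + D mod T"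
    using assms(1) by simp_all
  then have "D + r = T * (D div T + 1)"
    unfolding r_def by (simp add: algebra_simps, linarith)
  then have "T dvd D + c * u"
    unfolding cu by (metis add.assoc dvd_add dvd_triv_left)
  moreover have "2 \<le> c"
  proof -
    have "2 \<le> x * r + 2 * T"
      using assms(1) by simp
    also have "\<dots> \<le> c"
      unfolding c_def using assms(2) by simp
    finally show ?thesis .
  qed
  ultimately show ?thesis
    by (auto simp: c_def)
qed (use assms in \<open>auto intro!: exI[of _ "2 * b"]\<close>)

lemma ex_periodic_power_mod:
  fixes q M T :: nat
  assumes "T > 0"
  shows "\<exists>i \<delta>. \<delta> > 0 \<and> (\<forall>k. q ^ (M * q ^ (i + k * \<delta>)) mod T = q ^ (M * q ^ i) mod T)"
proof -
  define U where "U i = q ^ (M * q ^ i)" for i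
  have "finite (range (\<lambda>i. U i mod T))"
    by (rule finite_subset[of _ "{..<T}"]) (use assms in auto)
  then obtain i j where "i < j" "U i mod T = U j mod T"
    using ex_less_eq_of_finite_range by blast
  then obtain \<delta> where "\<delta> > 0" and period: "U (i + \<delta>) mod T = U i mod T"
    by (metis less_imp_add_positive)
  have "U (i + k * \<delta>) mod T = U i mod T" for k
  proof (induction k)
    case (Suc k)
    have "U (i + Suc k * \<delta>) = U (i + \<delta>) ^ (q ^ (k * \<delta>))"
      by (simp add: U_def power_add power_mult ac_simps)
    then have "U (i + Suc k * \<delta>) mod T = (U (i + \<delta>) mod T) ^ (q ^ (k * \<delta>)) mod T"
      by (simp add: power_mod)
    also have "\<dots> = U i ^ (q ^ (k * \<delta>)) mod T"
      by (simp add: period power_mod)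
    also have "U i ^ (q ^ (k * \<delta>)) = U (i + k * \<delta>)"
      by (simp add: U_def power_add power_mult)
    finally show ?case
      using Suc by simp
  qed simp
  then show ?thesis
    using \<open>\<delta> > 0\<close> unfolding U_def by blast
qed
lemma ex_sum_powers_dvd:
  fixes q :: nat
  assumes "q \<ge> 2" "T > 0" "coprime T q"
  shows "\<exists>ix c. strict_mono ix \<and> 2 \<le> c \<and> q ^ L dvd c \<and> T dvd D + (\<Sum>k<c. q ^ (M * q ^ ix k))"
proof -
  obtain i \<delta> where "\<delta> > 0" and period: "\<forall>k. q ^ (M * q ^ (i + k * \<delta>)) mod T = q ^ (M * q ^ i) mod T"
    using ex_periodic_power_mod[OF assms(2)] by blast
  let ?u = "q ^ (M * q ^ i)"
  have "coprime (q ^ L * ?u) T"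
    using assms(3) by (simp add: coprime_commute)
  moreover have "q ^ L > 0"
    using assms(1) by simp
  ultimately obtain c where "c \<ge> 2" "q ^ L dvd c" and c: "T dvd D + c * ?u"
    using ex_multiple_cong[OF assms(2)] by blast
  define ix where "ix k = i + k * \<delta>" for k
  have "strict_mono ix"
    using \<open>\<delta> > 0\<close> by (intro strict_monoI) (simp add: ix_def)
  have "(\<Sum>k<c. q ^ (M * q ^ ix k)) mod T = (\<Sum>k<c. q ^ (M * q ^ ix k) mod T) mod T"
    by (simp add: mod_sum_eq)
  also have "\<dots> = (c * ?u) mod T"
    using period by (simp add: ix_def mod_mult_right_eq)
  finally have "(D + (\<Sum>k<c. q ^ (M * q ^ ix k))) mod T = (D + c * ?u) mod T"
    using mod_add_right_eq by metis
  then have "T dvd D + (\<Sum>k<c. q ^ (M * q ^ ix k))"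
    using c by (simp add: dvd_eq_mod_eq_0)
  then show ?thesis
    using \<open>strict_mono ix\<close> \<open>c \<ge> 2\<close> \<open>q ^ L dvd c\<close> by blast
qed

section \<open>A reducible seed\<close>

lemma prod_Xq_minus_X_plus_1_dvd:
  fixes P :: "'a::{finite,field_gcd} poly" and ix :: "nat \<Rightarrow> nat"
  assumes "P dvd Xq_minus_X M" "strict_mono ix" "\<forall>k<c. ix k < J"
  shows "P * (\<Prod>k<c. Xq_minus_X (M * CARD('a) ^ ix k) + 1) dvd Xq_minus_X (M * CARD('a) ^ J)"
  using assms(3)
proof (induction c arbitrary: J)
  case 0
  have "Xq_minus_X M dvd (Xq_minus_X (M * CARD('a) ^ J) :: 'a poly)"
    by (rule Xq_minus_X_dvd) simp
  with assms(1) have "P dvd Xq_minus_X (M * CARD('a) ^ J)"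
    by (rule dvd_trans)
  then show ?case
    by simp
next
  case (Suc c)
  let ?q = "CARD('a)"
  let ?Q = "P * (\<Prod>k<c. Xq_minus_X (M * ?q ^ ix k) + 1)"
  have "?Q dvd Xq_minus_X (M * ?q ^ ix c)"
    using Suc.IH assms(2) by (simp add: strict_mono_less)
  then have cop: "coprime ?Q (Xq_minus_X (M * ?q ^ ix c) + 1)"
    by (rule coprime_Xq_minus_X_plus_1) simp
  have "?q ^ Suc (ix c) dvd ?q ^ J"
    using Suc.prems by (intro le_imp_power_dvd) (simp add: Suc_le_eq)
  then have "M * ?q ^ Suc (ix c) dvd M * ?q ^ J"
    by (rule mult_dvd_mono[OF dvd_refl])
  then have "M * ?q ^ ix c * ?q dvd M * ?q ^ J"
    by (simp add: ac_simps)
  from Xq_minus_X_dvd[OF this]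
  have "Xq_minus_X (M * ?q ^ ix c) + 1 dvd (Xq_minus_X (M * ?q ^ J) :: 'a poly)"
    by (rule dvd_trans[OF Xq_minus_X_plus_1_dvd])
  with Suc have "?Q * (Xq_minus_X (M * ?q ^ ix c) + 1) dvd Xq_minus_X (M * ?q ^ J)"
    using cop by (intro divides_mult[of ?Q]) simp_all
  then show ?case
    by (simp add: mult.assoc)
qed

lemma dvd_prod_diff_power:
  fixes m b :: "'a::comm_ring_1"
  assumes "\<forall>k\<in>A. m dvd f k - b"
  shows "m dvd prod f A - b ^ card A"
proof (cases "finite A")
  case True
  then show ?thesis
    using assms
  proof (induction A rule: finite_induct)
    case (insert x A)
    have "prod f (insert x A) - b ^ card (insert x A)
        = f x * (prod f A - b ^ card A) + (f x - b) * b ^ card A"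
      using insert.hyps by (simp add: algebra_simps)
    then show ?case
      using insert by (simp add: dvd_add)
  qed simp
qed simp

lemma prod_Xq_minus_X_plus_1_cong:
  fixes g :: "'a::{finite,field} poly" and ix :: "nat \<Rightarrow> nat"
  assumes "frob_period g M" "M > 0" "CARD('a) ^ M dvd c"
  shows "g dvd (\<Prod>k<c. Xq_minus_X (M * CARD('a) ^ ix k) + 1) - 1"
proof -
  let ?q = "CARD('a)"
  let ?n = "Xq_minus_X M :: 'a poly"
  have "\<forall>k\<in>{..<c}. g dvd (Xq_minus_X (M * ?q ^ ix k) + 1) - (1 + ?n)"
    using frob_period_cong[OF assms(1), of "M * ?q ^ _" M] assms(2)
    by (simp add: Xq_minus_X_def algebra_simps)
  from dvd_prod_diff_power[OF this]
  have "g dvd (\<Prod>k<c. Xq_minus_X (M * ?q ^ ix k) + 1) - (1 + ?n) ^ c"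
    by simp
  moreover have "g dvd (1 + ?n) ^ c - 1"
  proof -
    have "g dvd X\<^sub>p ^ (?q ^ (M + M)) - X\<^sub>p ^ (?q ^ M)"
      using frob_period_cong[OF assms(1), of "M + M" M] assms(2) by simp
    then have "g dvd (1 + ?n) ^ (?q ^ M) - 1"
      by (simp add: Xq_minus_X_def frobenius_pow_add frobenius_pow_diff power_add power_mult)
    then have "g dvd ((1 + ?n) ^ (?q ^ M)) ^ (c div ?q ^ M) - 1 ^ (c div ?q ^ M)"
      by (rule dvd_power_diff)
    then show ?thesis
      using assms(3) by (simp flip: power_mult)
  qed
  ultimately show ?thesis
    by (rule dvd_diff_trans)
qed

lemma ex_factorization_mult_prod:
  fixes P :: "'a::idom poly" and Z :: "nat \<Rightarrow> 'a poly"
  assumes "2 \<le> c" "P \<noteq> 0" "\<And>k. degree (Z k) > 0"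
  shows "\<exists>A B. P * (\<Prod>k<c. Z k) = A * B \<and> degree A > 0 \<and> degree B > 0"
proof -
  obtain c' where c: "c = Suc c'" "c' \<ge> 1"
    using assms(1) by (cases c) auto
  have "Z k \<noteq> 0" for k
    using assms(3)[of k] by auto
  define B where "B = P * (\<Prod>k<c'. Z (Suc k))"
  have "0 < degree (Z (Suc 0))"
    by (rule assms(3))
  also have "\<dots> \<le> (\<Sum>k<c'. degree (Z (Suc k)))"
    by (rule member_le_sum) (use c in auto)
  also have "\<dots> \<le> degree B"
    using assms(2) \<open>\<And>k. Z k \<noteq> 0\<close> by (simp add: B_def degree_mult_eq degree_prod_sum_eq)
  finally have "degree B > 0" .
  moreover have "P * (\<Prod>k<c. Z k) = Z 0 * B"
    by (simp add: c(1) B_def prod.lessThan_Suc_shift ac_simps del: prod.lessThan_Suc)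
  ultimately show ?thesis
    using assms(3) by blast
qed

lemma ex_carmichael_seed:
  fixes g P :: "'a::{finite,field_gcd} poly"
  assumes "frob_period g M" "M > 0" "lead_coeff P = 1" "P dvd Xq_minus_X M"
  shows "\<exists>A B N e. lead_coeff (A * B) = 1 \<and> (A * B) mod g = P mod g \<and> degree A > 0 \<and>
    degree B > 0 \<and> A * B dvd Xq_minus_X N \<and> N * M * Suc CARD('a) dvd degree (A * B) * CARD('a) ^ e"
proof -
  let ?q = "CARD('a)"
  define Z where "Z i = Xq_minus_X (M * ?q ^ i) + (1 :: 'a poly)" for i
  have q2: "?q \<ge> 2"
    by (rule card_ge_2)
  have Z: "degree (Z i) = ?q ^ (M * ?q ^ i)" "lead_coeff (Z i) = 1" for i
  proof -
    have "M * ?q ^ i > 0"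
      using assms(2) by simp
    then show "degree (Z i) = ?q ^ (M * ?q ^ i)" "lead_coeff (Z i) = 1"
      unfolding Z_def by (rule degree_Xq_minus_X_plus_1, rule lead_coeff_Xq_minus_X_plus_1)
  qed
  obtain T s e where W: "M * M * Suc ?q = T * s" "coprime T ?q" "s dvd ?q ^ e"
    using ex_coprime_part[of "M * M * Suc ?q" ?q] assms(2) by auto
  then have "T > 0"
    using assms(2) by (cases T) auto
  then obtain ix c where ix: "strict_mono ix" and "2 \<le> c" "?q ^ M dvd c"
    and T: "T dvd degree P + (\<Sum>k<c. ?q ^ (M * ?q ^ ix k))"
    using ex_sum_powers_dvd[OF q2 _ W(2)] by blast
  define f where "f = P * (\<Prod>k<c. Z (ix k))"
  have "P \<noteq> 0" "Z i \<noteq> 0" for i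
    using assms(3) Z(2)[of i] by auto
  then have deg: "degree f = degree P + (\<Sum>k<c. ?q ^ (M * ?q ^ ix k))"
    by (simp add: f_def degree_mult_eq degree_prod_sum_eq Z)
  have "lead_coeff f = 1"
    unfolding f_def by (simp only: lead_coeff_mult lead_coeff_prod Z(2) assms(3) prod.neutral_const mult_1)
  moreover have "f mod g = P mod g"
  proof -
    have "g dvd P * ((\<Prod>k<c. Z (ix k)) - 1)"
      using prod_Xq_minus_X_plus_1_cong[OF assms(1,2) \<open>?q ^ M dvd c\<close>] by (simp add: Z_def)
    then show ?thesis
      by (simp add: f_def mod_eq_dvd_iff algebra_simps)
  qed
  moreover have "f dvd Xq_minus_X (M * ?q ^ Suc (ix c))"
    using ix unfolding f_def Z_def
    by (intro prod_Xq_minus_X_plus_1_dvd[OF assms(4) ix]) (auto simp: less_Suc_eq_le strict_mono_less_eq)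
  moreover have "M * ?q ^ Suc (ix c) * M * Suc ?q dvd degree f * ?q ^ (e + Suc (ix c))"
  proof -
    have "T * s dvd degree f * ?q ^ e"
      using T W(3) unfolding deg by (rule mult_dvd_mono)
    then have "T * s * ?q ^ Suc (ix c) dvd degree f * ?q ^ e * ?q ^ Suc (ix c)"
      by (rule mult_dvd_mono[OF _ dvd_refl])
    moreover have "M * ?q ^ Suc (ix c) * M * Suc ?q = T * s * ?q ^ Suc (ix c)"
      unfolding W(1)[symmetric] by (simp only: mult_ac)
    ultimately show ?thesis
      by (simp only: power_add mult.assoc)
  qed
  moreover obtain A B where "f = A * B" "degree A > 0" "degree B > 0"
    using ex_factorization_mult_prod[OF \<open>2 \<le> c\<close> \<open>P \<noteq> 0\<close>, of "\<lambda>k. Z (ix k)"] q2 Z(1)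
    unfolding f_def by auto
  ultimately show ?thesis
    by blast
qed

theorem corollary4p3:
  fixes g h :: "'a::{finite,field_gcd} poly"
  assumes "g \<noteq> 0"
    and "gcd g h = 1 \<or> squarefree (gcd g h)"
  shows "infinite {f :: 'a poly. lead_coeff f = 1 \<and> carmichael_poly f \<and> f mod g = h mod g}"
proof -
  have "squarefree (gcd g h)"
    using assms(2) by auto
  then obtain P where P: "lead_coeff P = 1" "squarefree P" "P mod g = h mod g"
    using ex_monic_squarefree_cong[OF assms(1)] by blast
  have "g * P \<noteq> 0"
    using assms(1) P(1) by auto
  then obtain M where "M > 0" "frob_period (g * P) M"
    using ex_frob_period by blast
  then have "frob_period g M" "P dvd Xq_minus_X M"
    using P(2) frob_period_dvd squarefree_dvd_Xq_minus_X by (metis dvd_triv_left dvd_triv_right)+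
  then obtain A B N e where "lead_coeff (A * B) = 1" "(A * B) mod g = P mod g" "degree A > 0"
    "degree B > 0" "A * B dvd Xq_minus_X N" "N * M * Suc CARD('a) dvd degree (A * B) * CARD('a) ^ e"
    using ex_carmichael_seed \<open>M > 0\<close> P(1) by blast
  then have "infinite {f. lead_coeff f = 1 \<and> carmichael_poly f \<and> f mod g = (A * B) mod g}"
    using infinite_carmichael_polys_cong \<open>frob_period g M\<close> \<open>M > 0\<close> by blast
  then show ?thesis
    using \<open>(A * B) mod g = P mod g\<close> P(3) by simp
qed

end
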